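(* Let $A=I_0+\dots+I_n$ be a sum of C$^*$-ideals, $J\subseteq\{0,\dots,n\}$ and $p\in\mathbb N$. Let $f\in B_J$ satisfy $f|_{\Delta^n_L}=0$ for every $L\subseteq\{0,\dots,n\}$ with $|L|=p+1$. Then $f$ is a finite sum $f=\sum_L f_L$ with $f_L\in B_L$, where each occurring $L$ satisfies $L\subseteq J$ and $|L|\le p$.
   Context: $\Delta^n=\{x\in[0,1]^{n+1}:\sum_ix_i=1\}$, $\partial\Delta^n$ = points with a zero coordinate, $\Delta^n_j=\{x\in\Delta^n:x_j\le x_i\ \forall i\}$, $\Delta^n_L=\bigcap_{j\in L}\Delta^n_j$ for nonempty $L$. $B=\{f:\Delta^n\to A\text{ continuous}: f|_{\partial\Delta^n}=0,\ f(\Delta^n_j)\subseteq I_j\ \forall j\}$ and $B_L=\{f\in B:f(\Delta^n_{j'})=0\ \forall j'\notin L\}$ (so $B_\emptyset=0$). *)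

theory Defs
  imports "HOL-Analysis.Analysis"
begin

definition cstar_algebra :: "(complex \<Rightarrow> 'a::{banach,real_normed_algebra} \<Rightarrow> 'a) \<Rightarrow> ('a \<Rightarrow> 'a) \<Rightarrow> bool" where
  "cstar_algebra cmul star \<longleftrightarrow>
     (\<forall>r x. cmul (complex_of_real r) x = scaleR r x) \<and>
     (\<forall>c x y. cmul c (x + y) = cmul c x + cmul c y) \<and>
     (\<forall>c d x. cmul (c + d) x = cmul c x + cmul d x) \<and>
     (\<forall>c d x. cmul c (cmul d x) = cmul (c * d) x) \<and>
     (\<forall>c x. norm (cmul c x) = cmod c * norm x) \<and>
     (\<forall>c x y. cmul c (x * y) = cmul c x * y \<and> cmul c (x * y) = x * cmul c y) \<and>
     (\<forall>x. star (star x) = x) \<and>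
     (\<forall>x y. star (x + y) = star x + star y) \<and>
     (\<forall>c x. star (cmul c x) = cmul (cnj c) (star x)) \<and>
     (\<forall>x y. star (x * y) = star y * star x) \<and>
     (\<forall>x. norm (star x * x) = (norm x)\<^sup>2)"

definition cstar_ideal :: "(complex \<Rightarrow> 'a::{banach,real_normed_algebra} \<Rightarrow> 'a) \<Rightarrow> 'a set \<Rightarrow> bool" where
  "cstar_ideal cmul I \<longleftrightarrow> closed I \<and> 0 \<in> I \<and>
     (\<forall>x\<in>I. \<forall>y\<in>I. x + y \<in> I) \<and> (\<forall>c. \<forall>x\<in>I. cmul c x \<in> I) \<and>
     (\<forall>a. \<forall>x\<in>I. a * x \<in> I \<and> x * a \<in> I)"

text \<open>Standard std_simplex, indexed by a finite type 'n (so n+1 = CARD('n)).\<close>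
definition std_simplex :: "(real^'n::finite) set" where
  "std_simplex = {x. (\<forall>i. 0 \<le> x$i \<and> x$i \<le> 1) \<and> (\<Sum>i\<in>UNIV. x$i) = 1}"

definition simplex_boundary :: "(real^'n::finite) set" where
  "simplex_boundary = {x\<in>std_simplex. \<exists>i. x$i = 0}"

definition simplex_part :: "'n::finite \<Rightarrow> (real^'n) set" where
  "simplex_part j = {x\<in>std_simplex. \<forall>i. x$j \<le> x$i}"

definition simplex_parts :: "'n::finite set \<Rightarrow> (real^'n) set" where
  "simplex_parts L = (\<Inter>j\<in>L. simplex_part j)"

definition Bset :: "('n::finite \<Rightarrow> 'a::{banach,real_normed_algebra} set) \<Rightarrow> (real^'n \<Rightarrow> 'a) set" where
  "Bset I = {f. continuous_on std_simplex f \<and> (\<forall>x\<in>simplex_boundary. f x = 0) \<and>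
                (\<forall>j. f ` simplex_part j \<subseteq> I j)}"

definition BsetL :: "('n::finite \<Rightarrow> 'a::{banach,real_normed_algebra} set) \<Rightarrow> 'n set \<Rightarrow> (real^'n \<Rightarrow> 'a) set" where
  "BsetL I L = {f\<in>Bset I. \<forall>j'. j' \<notin> L \<longrightarrow> (\<forall>x\<in>simplex_part j'. f x = 0)}"

end

theory Submission
  imports Defs
begin

text \<open>Let \<open>C\<^sub>L\<close> be the union of the parts \<open>\<Delta>\<^sup>n\<^sub>j\<close> with \<open>j \<notin> L\<close>. If \<open>f x \<noteq> 0\<close>, the set \<open>L\<close> of
  coordinates where \<open>x\<close> is minimal is contained in \<open>J\<close>, has at most \<open>p\<close> elements, and
  \<open>x \<notin> C\<^sub>L\<close>. Hence the distance functions to the closed sets \<open>C\<^sub>L\<close>, for the admissible \<open>L\<close>,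
  have a sum that is positive wherever \<open>f\<close> is nonzero, and normalising them gives
  continuous coefficients \<open>c\<^sub>L\<close> with \<open>\<Sum> c\<^sub>L = 1\<close> on the support of \<open>f\<close> and \<open>c\<^sub>L = 0\<close> on
  \<open>C\<^sub>L\<close>. The pieces \<open>f\<^sub>L = c\<^sub>L f\<close> stay in the ideals because the coefficients are real
  scalars.\<close>

lemma continuous_on_scaleR_quotient:
  fixes f :: "'a::t2_space \<Rightarrow> 'b::real_normed_vector"
  assumes w: "continuous_on A w" and S: "continuous_on A S" and f: "continuous_on A f"
    and bounds: "\<And>x. x \<in> A \<Longrightarrow> 0 \<le> w x \<and> w x \<le> S x"
    and vanish: "\<And>x. x \<in> A \<Longrightarrow> S x = 0 \<Longrightarrow> f x = 0"
  shows "continuous_on A (\<lambda>x. (w x / S x) *\<^sub>R f x)"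
proof (subst continuous_on_eq_continuous_within, intro ballI)
  fix x assume x: "x \<in> A"
  have fx: "continuous (at x within A) f"
    using f x continuous_on_eq_continuous_within by blast
  show "continuous (at x within A) (\<lambda>x. (w x / S x) *\<^sub>R f x)"
  proof (cases "S x = 0")
    case False
    have "continuous (at x within A) (\<lambda>y. w y / S y)"
      using w S x False by (intro continuous_intros) (auto simp: continuous_on_eq_continuous_within)
    then show ?thesis using fx by (rule continuous_scaleR)
  next
    case True
    then have "f x = 0" using vanish x by blast
    have "norm ((w y / S y) *\<^sub>R f y) \<le> norm (f y)" if "y \<in> A" for y
    proof -
      have "\<bar>w y / S y\<bar> \<le> 1"
        using bounds[OF that] by (cases "S y = 0") (auto simp: divide_le_eq)
      then show ?thesis
        unfolding norm_scaleR by (rule mult_left_le_one_le[OF norm_ge_zero abs_ge_zero])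
    qed
    then have "eventually (\<lambda>y. norm ((w y / S y) *\<^sub>R f y) \<le> norm (f y)) (at x within A)"
      by (simp add: eventually_at_filter)
    moreover have "(f \<longlongrightarrow> 0) (at x within A)"
      using fx \<open>f x = 0\<close> by (simp add: continuous_within)
    ultimately show ?thesis
      using \<open>f x = 0\<close> by (simp add: continuous_within tendsto_0_le[where K = 1])
  qed
qed

text \<open>Since \<open>infdist x {} = 0\<close>, the empty set gets the constant weight 1 instead.\<close>
definition distance_weight :: "'a::metric_space set \<Rightarrow> 'a \<Rightarrow> real" where
  "distance_weight C x = (if C = {} then 1 else infdist x C)"

lemma distance_weight_nonneg: "0 \<le> distance_weight C x"
  by (simp add: distance_weight_def infdist_nonneg)

lemma distance_weight_eq_0: "x \<in> C \<Longrightarrow> distance_weight C x = 0"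
  by (auto simp: distance_weight_def)

lemma distance_weight_pos: "closed C \<Longrightarrow> x \<notin> C \<Longrightarrow> 0 < distance_weight C x"
  by (auto simp: distance_weight_def intro: infdist_pos_not_in_closed)

lemma continuous_on_distance_weight: "continuous_on A (distance_weight C)"
  by (cases "C = {}") (auto simp: distance_weight_def intro!: continuous_intros)

lemma continuous_coefficients_subordinate_to_closed:
  fixes f :: "'a::metric_space \<Rightarrow> 'b::real_normed_vector" and C :: "'i \<Rightarrow> 'a set"
  assumes K: "finite K" and closed: "\<And>k. closed (C k)" and f: "continuous_on A f"
    and avoid: "\<And>x. x \<in> A \<Longrightarrow> f x \<noteq> 0 \<Longrightarrow> \<exists>k\<in>K. x \<notin> C k"
  obtains c where "\<And>k. k \<in> K \<Longrightarrow> continuous_on A (\<lambda>x. c k x *\<^sub>R f x)"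
    and "\<And>k x. x \<in> C k \<Longrightarrow> c k x = 0"
    and "\<And>x. x \<in> A \<Longrightarrow> f x = (\<Sum>k\<in>K. c k x *\<^sub>R f x)"
proof
  define S where "S x = (\<Sum>k\<in>K. distance_weight (C k) x)" for x
  have weight_le_S: "distance_weight (C k) x \<le> S x" if "k \<in> K" for k x
    unfolding S_def using K that by (intro member_le_sum distance_weight_nonneg)
  have S_pos: "0 < S x" if x: "x \<in> A" "f x \<noteq> 0" for x
  proof -
    obtain k where "k \<in> K" "x \<notin> C k" using avoid[OF x] by blast
    then show ?thesis
      using distance_weight_pos[OF closed] weight_le_S by (meson less_le_trans)
  qed
  let ?c = "\<lambda>k x. distance_weight (C k) x / S x"
  show "continuous_on A (\<lambda>x. ?c k x *\<^sub>R f x)" if k: "k \<in> K" for k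
    using S_pos weight_le_S[OF k] distance_weight_nonneg f unfolding S_def
    by (intro continuous_on_scaleR_quotient continuous_intros continuous_on_distance_weight) force+
  show "?c k x = 0" if x: "x \<in> C k" for k x
    using x by (simp add: distance_weight_eq_0)
  show "f x = (\<Sum>k\<in>K. ?c k x *\<^sub>R f x)" if x: "x \<in> A" for x
  proof -
    have "(\<Sum>k\<in>K. ?c k x *\<^sub>R f x) = (S x / S x) *\<^sub>R f x"
      by (simp add: S_def scaleR_sum_left[symmetric] sum_divide_distrib[symmetric])
    also have "\<dots> = f x"
      using S_pos[OF x] by (cases "f x = 0") auto
    finally show ?thesis ..
  qed
qed

lemma cstar_ideal_scaleR:
  assumes "cstar_algebra cmul star" "cstar_ideal cmul I" "x \<in> I"
  shows "r *\<^sub>R x \<in> I"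
proof -
  have "cmul (complex_of_real r) x \<in> I"
    using assms(2,3) by (simp add: cstar_ideal_def)
  then show ?thesis
    using assms(1) by (simp add: cstar_algebra_def)
qed

lemma closed_simplex_part: "closed (simplex_part j)"
  unfolding simplex_part_def std_simplex_def
  by (auto intro!: closed_Collect_conj closed_Collect_all closed_Collect_le closed_Collect_eq
      continuous_intros)

lemma scaleR_in_Bset:
  assumes "cstar_algebra cmul star" "\<forall>j. cstar_ideal cmul (I j)" "f \<in> Bset I"
    and "continuous_on std_simplex (\<lambda>x. c x *\<^sub>R f x)"
  shows "(\<lambda>x. c x *\<^sub>R f x) \<in> Bset I"
  using assms cstar_ideal_scaleR[OF assms(1)] by (fastforce simp: Bset_def)

lemma simplex_part_iff_minimal:
  "x \<in> std_simplex \<Longrightarrow> x \<in> simplex_part j \<longleftrightarrow> (\<forall>k. x$j \<le> x$k)"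
  by (auto simp: simplex_part_def)

lemma minimal_coordinates_admissible:
  fixes f :: "real^'n::finite \<Rightarrow> 'a::{banach,real_normed_algebra}"
  assumes fJ: "f \<in> BsetL I J"
    and vanish: "\<forall>L. card L = p + 1 \<longrightarrow> (\<forall>x\<in>simplex_parts L. f x = 0)"
    and x: "x \<in> std_simplex" and fx: "f x \<noteq> 0"
  defines "L \<equiv> {i. \<forall>k. x$i \<le> x$k}"
  shows "L \<subseteq> J" and "card L \<le> p" and "x \<notin> (\<Union>j\<in>-L. simplex_part j)"
proof -
  show "L \<subseteq> J"
    using fJ fx simplex_part_iff_minimal[OF x] by (auto simp: BsetL_def L_def)
  show "card L \<le> p"
  proof (rule ccontr)
    assume "\<not> card L \<le> p"
    then obtain L' where "L' \<subseteq> L" "card L' = p + 1"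
      by (metis finite obtain_subset_with_card_n not_less_eq_eq Suc_eq_plus1)
    moreover from \<open>L' \<subseteq> L\<close> have "x \<in> simplex_parts L'"
      using simplex_part_iff_minimal[OF x] by (auto simp: simplex_parts_def L_def)
    ultimately show False using vanish fx by blast
  qed
  show "x \<notin> (\<Union>j\<in>-L. simplex_part j)"
    using simplex_part_iff_minimal[OF x] by (auto simp: L_def)
qed

theorem lemma4p4p5:
  fixes cmul :: "complex \<Rightarrow> 'a::{banach,real_normed_algebra} \<Rightarrow> 'a"
    and star :: "'a \<Rightarrow> 'a"
    and I :: "'n::finite \<Rightarrow> 'a set"
    and J :: "'n set" and p :: nat and f :: "real^'n \<Rightarrow> 'a"
  assumes "cstar_algebra cmul star"
    and "\<forall>j. cstar_ideal cmul (I j)"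
    and "\<forall>a. \<exists>x. (\<forall>j. x j \<in> I j) \<and> a = (\<Sum>j\<in>UNIV. x j)"
    and "f \<in> BsetL I J"
    and "\<forall>L. card L = p + 1 \<longrightarrow> (\<forall>x\<in>simplex_parts L. f x = 0)"
  shows "\<exists>g. (\<forall>L. L \<subseteq> J \<and> card L \<le> p \<longrightarrow> g L \<in> BsetL I L) \<and>
             (\<forall>x\<in>std_simplex. f x = (\<Sum>L\<in>{L. L \<subseteq> J \<and> card L \<le> p}. g L x))"
proof -
  let ?LL = "{L. L \<subseteq> J \<and> card L \<le> p}" and ?C = "\<lambda>L. \<Union>j\<in>-L. simplex_part j"
  have fB: "f \<in> Bset I" using assms(4) by (simp add: BsetL_def)
  then have f_cont: "continuous_on std_simplex f" by (simp add: Bset_def)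
  have closed_C: "closed (?C L)" for L :: "'n set"
    using closed_simplex_part by (intro closed_UN) auto
  obtain c
    where cont: "\<And>L. L \<in> ?LL \<Longrightarrow> continuous_on std_simplex (\<lambda>x. c L x *\<^sub>R f x)"
      and zero: "\<And>L x. x \<in> ?C L \<Longrightarrow> c L x = 0"
      and sum: "\<And>x. x \<in> std_simplex \<Longrightarrow> f x = (\<Sum>L\<in>?LL. c L x *\<^sub>R f x)"
  proof (rule continuous_coefficients_subordinate_to_closed[OF finite closed_C f_cont])
    show "\<exists>L\<in>?LL. x \<notin> ?C L" if "x \<in> std_simplex" "f x \<noteq> 0" for x
      using minimal_coordinates_admissible[OF assms(4,5) that] by blast
  qed (rule that)
  have "(\<lambda>x. c L x *\<^sub>R f x) \<in> BsetL I L" if L: "L \<in> ?LL" for L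
  proof -
    have "(\<lambda>x. c L x *\<^sub>R f x) \<in> Bset I"
      by (rule scaleR_in_Bset[OF assms(1,2) fB cont[OF L]])
    moreover have "c L x *\<^sub>R f x = 0" if "j \<notin> L" "x \<in> simplex_part j" for j x
      using zero[of x L] that by auto
    ultimately show ?thesis by (simp add: BsetL_def)
  qed
  then show ?thesis
    using sum by (intro exI[of _ "\<lambda>L x. c L x *\<^sub>R f x"]) auto
qed

end
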